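(* Let $1\le k\le m<2n$. Under the shuffle representation, the image of $v[k,m]$ is $$v[k,m]=\alpha_k^m\cdot(x_mx_{m-1}\cdots x_{k+1}x_k),\qquad \alpha_k^m=\varepsilon_k^m(q-1)^{m-k}\prod_{k\le i<j\le m}p_{ij},$$ where $\varepsilon_k^m=1+q$ if $k\le n\le m$ and $m\ne\phi(k)$; $\varepsilon_k^m=1+q^{-1}$ if $m=\phi(k)\ne n$; and $\varepsilon_k^m=1$ otherwise.
   Context: Let $\mathbf{k}$ be a field, $G$ an abelian group, $n\ge 2$, $X=\{x_1,\dots,x_n\}$. Fix $g_i\in G$, characters $\chi^i:G\to\mathbf{k}^*$, $p_{ij}=\chi^i(g_j)$; for words $u,v$, $g_u,\chi^u$ are obtained by replacing $x_i$ by $g_i$, resp. $\chi^i$, and $p(u,v)=\chi^u(g_v)$ (bimultiplicative). $G\langle X\rangle$: skew group algebra, $x_ig=\chi^i(g)gx_i$; skew bracket $[u,v]=uv-p(u,v)vu$. Fix $q\in\mathbf{k}^*$, $q^3\ne1$, $q\ne-1$; assume $p_{ii}=q$ ($i<n$), $p_{nn}=q^2$, $p_{i,i-1}p_{i-1,i}=q^{-1}$ ($1<i<n$), $p_{n-1,n}p_{n,n-1}=q^{-2}$, $p_{ij}p_{ji}=1$ ($j>i+1$). $U_q^+(\mathfrak{sp}_{2n})$ is the quotient of $G\langle X\rangle$ by the ideal generated by $[x_i,[x_i,x_{i+1}]]$, $[[x_i,x_{i+1}],x_{i+1}]$ ($1\le i<n-1$), $[x_i,x_j]$ ($j>i+1$),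 $[[x_{n-1},x_n],x_n]$, $[x_{n-1},[x_{n-1},[x_{n-1},x_n]]]$. For $n<i<2n$, $x_i:=x_{2n-i}$ (and $p_{ij}$ for such indices means $\chi$ of the corresponding generators, e.g. $p_{ij}=p_{2n-i,j}$ if $i>n\ge j$); $\phi(i)=2n-i$. $v(k,m)=x_k\cdots x_m$; $v[k,k]=x_k$; for $k<m$: $v[k,m]=[[\dots[x_k,x_{k+1}],\dots],x_m]$ if $m<\phi(k)$; $v[k,m]=[x_k,[x_{k+1},[\dots,[x_{m-1},x_m]\dots]]]$ if $m>\phi(k)$; $v[k,m]=v[k,m-1]x_m-q^{-1}p(v(k,m-1),x_m)x_mv[k,m-1]$ if $m=\phi(k)$. Shuffle representation: let $\mathrm{Sh}$ be the vector space with basis the comonomials $(z_1\cdots z_r)$, $z_i\in X$, $r\ge0$, with the braided shuffle product $(a_1\cdots a_r)(b_1\cdots b_s)=\sum_w c_w\,(w)$, the sum over all shuffles $w$ of the two sequences, where $c_w=\prod p(b,a)^{-1}$ over all pairs of a letter $a$ of the first factor and a letter $b$ of the second factor such that $b$ precedes $a$ in $w$. The map $x_i\mapsto(x_i)$ extends to an algebra homomorphism from the subalgebra of $U_q^+(\mathfrak{sp}_{2n})$ generated by $x_1,\dots,x_n$ into $\mathrm{Sh}$; "the image under the shuffle representation" refers to this homomorphism. *)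

theory Defs
  imports Main
begin

text \<open>Generators x_1..x_n are encoded by their indices 1..n; a word is a nat list.
  The structure constants p_ij = chi^i(g_j) are given by a function
  p :: nat => nat => 'a (only values on {1..n} x {1..n} matter).\<close>

text \<open>Index convention: x_i := x_(2n-i) for n < i < 2n.\<close>
definition gidx :: "nat \<Rightarrow> nat \<Rightarrow> nat" where
  "gidx n i = (if i \<le> n then i else 2*n - i)"

definition phi :: "nat \<Rightarrow> nat \<Rightarrow> nat" where
  "phi n i = 2*n - i"

definition pw :: "(nat \<Rightarrow> nat \<Rightarrow> 'a::field) \<Rightarrow> nat list \<Rightarrow> nat list \<Rightarrow> 'a" where
  "pw p u v = (\<Prod>i<length u. \<Prod>j<length v. p (u!i) (v!j))"

definition vword :: "nat \<Rightarrow> nat \<Rightarrow> nat \<Rightarrow> nat list" where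
  "vword n k m = map (gidx n) [k..<Suc m]"

text \<open>Elements of Sh are represented by their coefficient functions on comonomials
  (words); all elements considered are finitely supported.\<close>
type_synonym 'a sh = "nat list \<Rightarrow> 'a"

definition sh_mono :: "nat list \<Rightarrow> 'a::field sh" where
  "sh_mono w = (\<lambda>u. if u = w then 1 else 0)"

definition sh_smult :: "'a::field \<Rightarrow> 'a sh \<Rightarrow> 'a sh" where
  "sh_smult c f = (\<lambda>u. c * f u)"

definition sh_sub :: "'a::field sh \<Rightarrow> 'a sh \<Rightarrow> 'a sh" where
  "sh_sub f g = (\<lambda>u. f u - g u)"

text \<open>A shuffle of a (length r) and b (length s) is encoded by the set S of positions
  in {0..<r+s} occupied by the letters of a.  rank S i = number of positions of S before i.\<close>
definition rnk :: "nat set \<Rightarrow> nat \<Rightarrow> nat" where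
  "rnk S i = card {j\<in>S. j < i}"

definition shuffle_word :: "nat set \<Rightarrow> nat list \<Rightarrow> nat list \<Rightarrow> nat list" where
  "shuffle_word S a b =
     map (\<lambda>i. if i \<in> S then a ! rnk S i else b ! rnk ({0..<length a + length b} - S) i)
         [0..<length a + length b]"

definition shuffle_coeff :: "(nat \<Rightarrow> nat \<Rightarrow> 'a::field) \<Rightarrow> nat set \<Rightarrow> nat list \<Rightarrow> nat list \<Rightarrow> 'a" where
  "shuffle_coeff p S a b =
     (let T = {0..<length a + length b} - S in
      \<Prod>(i,j)\<in>{(i,j). i \<in> S \<and> j \<in> T \<and> j < i}.
         inverse (p (b ! rnk T j) (a ! rnk S i)))"

definition shuffle_sets :: "nat \<Rightarrow> nat \<Rightarrow> nat set set" where
  "shuffle_sets r s = {S. S \<subseteq> {0..<r+s} \<and> card S = r}"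

definition shuf_basis :: "(nat \<Rightarrow> nat \<Rightarrow> 'a::field) \<Rightarrow> nat list \<Rightarrow> nat list \<Rightarrow> 'a sh" where
  "shuf_basis p a b = (\<lambda>w. \<Sum>S\<in>{S\<in>shuffle_sets (length a) (length b). shuffle_word S a b = w}.
                            shuffle_coeff p S a b)"

definition sh_mult :: "(nat \<Rightarrow> nat \<Rightarrow> 'a::field) \<Rightarrow> 'a sh \<Rightarrow> 'a sh \<Rightarrow> 'a sh" where
  "sh_mult p f g = (\<lambda>w. \<Sum>u\<in>{u. f u \<noteq> 0}. \<Sum>v\<in>{v. g v \<noteq> 0}. f u * g v * shuf_basis p u v w)"

definition sh_br :: "(nat \<Rightarrow> nat \<Rightarrow> 'a::field) \<Rightarrow> nat list \<Rightarrow> 'a sh \<Rightarrow> nat list \<Rightarrow> 'a sh \<Rightarrow> 'a sh" where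
  "sh_br p u f v g = sh_sub (sh_mult p f g) (sh_smult (pw p u v) (sh_mult p g f))"

definition shx :: "nat \<Rightarrow> nat \<Rightarrow> 'a::field sh" where
  "shx n i = sh_mono [gidx n i]"

fun vleft :: "(nat \<Rightarrow> nat \<Rightarrow> 'a::field) \<Rightarrow> nat \<Rightarrow> nat \<Rightarrow> nat \<Rightarrow> 'a sh" where
  "vleft p n k 0 = shx n k"
| "vleft p n k (Suc d) =
     sh_br p (vword n k (k+d)) (vleft p n k d) [gidx n (k + Suc d)] (shx n (k + Suc d))"

fun vright :: "(nat \<Rightarrow> nat \<Rightarrow> 'a::field) \<Rightarrow> nat \<Rightarrow> nat \<Rightarrow> nat \<Rightarrow> 'a sh" where
  "vright p n m 0 = shx n m"
| "vright p n m (Suc d) =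
     sh_br p [gidx n (m - Suc d)] (shx n (m - Suc d)) (vword n (m - d) m) (vright p n m d)"

definition vbr :: "(nat \<Rightarrow> nat \<Rightarrow> 'a::field) \<Rightarrow> 'a \<Rightarrow> nat \<Rightarrow> nat \<Rightarrow> nat \<Rightarrow> 'a sh" where
  "vbr p q n k m =
    (if k = m then shx n k
     else if m < phi n k then vleft p n k (m - k)
     else if phi n k < m then vright p n m (m - k)
     else sh_sub (sh_mult p (vleft p n k (m - 1 - k)) (shx n m))
                 (sh_smult (inverse q * pw p (vword n k (m - 1)) [gidx n m])
                           (sh_mult p (shx n m) (vleft p n k (m - 1 - k)))))"

definition eps :: "'a::field \<Rightarrow> nat \<Rightarrow> nat \<Rightarrow> nat \<Rightarrow> 'a" where
  "eps q n k m =
    (if k \<le> n \<and> n \<le> m \<and> m \<noteq> phi n k then 1 + q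
     else if m = phi n k \<and> m \<noteq> n then 1 + inverse q
     else 1)"

definition alpha :: "(nat \<Rightarrow> nat \<Rightarrow> 'a::field) \<Rightarrow> 'a \<Rightarrow> nat \<Rightarrow> nat \<Rightarrow> nat \<Rightarrow> 'a" where
  "alpha p q n k m =
     eps q n k m * (q - 1) ^ (m - k) *
     (\<Prod>(i,j)\<in>{(i,j). k \<le> i \<and> i < j \<and> j \<le> m}. p (gidx n i) (gidx n j))"

end

theory Submission
  imports Defs
begin

text \<open>Shuffling a single letter a into a comonomial u gives the sum over all insertion positions t;
  in the skew bracket of u with a, the coefficient of the insertion at t is p(w,a) (p(a,w) p(w,a))^-1
  minus a constant, where w is the part of u that a jumps over.  Inductively v[k,m] is a multiple
  of the reversed word, and the relations among the p_ij make every insertion except the extreme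
  one vanish: either a braids trivially with what it jumps over, or two adjacent positions around
  an occurrence of a give the same word with opposite coefficients.  The coefficient that
  survives is the factor by which alpha grows from one bracket to the next.\<close>

section \<open>Shuffling a letter into a word\<close>

definition insert_at :: "nat \<Rightarrow> 'b \<Rightarrow> 'b list \<Rightarrow> 'b list" where
  "insert_at t a u = take t u @ a # drop t u"

definition insertion_sum :: "(nat \<Rightarrow> 'a::field) \<Rightarrow> nat \<Rightarrow> nat list \<Rightarrow> 'a sh" where
  "insertion_sum D a u = (\<lambda>w. \<Sum>t\<in>{t. t \<le> length u \<and> insert_at t a u = w}. D t)"

lemma length_insert_at [simp]: "t \<le> length u \<Longrightarrow> length (insert_at t a u) = Suc (length u)"
  by (simp add: insert_at_def)

lemma insert_at_nth:
  assumes "t \<le> length u" "i \<le> length u"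
  shows "insert_at t a u ! i = (if i < t then u ! i else if i = t then a else u ! (i - 1))"
  using assms by (auto simp: insert_at_def nth_append min_def nth_Cons')

lemma insert_at_0 [simp]: "insert_at 0 a u = a # u"
  by (simp add: insert_at_def)

lemma insert_at_length [simp]: "insert_at (length u) a u = u @ [a]"
  by (simp add: insert_at_def)

lemma insert_at_around_occurrence:
  "insert_at (length A) b (A @ b # C) = insert_at (Suc (length A)) b (A @ b # C)"
  by (simp add: insert_at_def)

lemma hd_insert_at: "0 < t \<Longrightarrow> u \<noteq> [] \<Longrightarrow> hd (insert_at t a u) = hd u"
  by (cases u) (auto simp: insert_at_def take_Cons')

lemma last_insert_at: "t < length u \<Longrightarrow> last (insert_at t a u) = last u"
  by (auto simp: insert_at_def)

lemma rnk_remove_point: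
  assumes "i \<le> r" "i \<noteq> t" "t \<le> r"
  shows "rnk ({0..<Suc r} - {t}) i = (if i < t then i else i - 1)"
proof (cases "i < t")
  case True
  hence "{j\<in>{0..<Suc r} - {t}. j < i} = {0..<i}" using assms by auto
  thus ?thesis using True by (simp add: rnk_def)
next
  case False
  hence "{j\<in>{0..<Suc r} - {t}. j < i} = {0..<i} - {t}" using assms by auto
  thus ?thesis using False assms by (simp add: rnk_def)
qed

lemma rnk_singleton [simp]: "rnk {t} t = 0"
  by (simp add: rnk_def)

lemma shuffle_sets_right_1: "shuffle_sets r 1 = (\<lambda>t. {0..<Suc r} - {t}) ` {..r}"
proof (intro set_eqI iffI)
  fix S assume "S \<in> shuffle_sets r 1"
  hence S: "S \<subseteq> {0..<Suc r}" "card S = r" by (auto simp: shuffle_sets_def)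
  hence "card ({0..<Suc r} - S) = 1" by (simp add: card_Diff_subset finite_subset)
  then obtain t where t: "{0..<Suc r} - S = {t}" by (rule card_1_singletonE)
  hence "t \<le> r" by auto
  moreover have "S = {0..<Suc r} - {t}" using S(1) t by blast
  ultimately show "S \<in> (\<lambda>t. {0..<Suc r} - {t}) ` {..r}" by auto
next
  fix S assume "S \<in> (\<lambda>t. {0..<Suc r} - {t}) ` {..r}"
  then obtain t where "t \<le> r" "S = {0..<Suc r} - {t}" by auto
  thus "S \<in> shuffle_sets r 1" by (auto simp: shuffle_sets_def)
qed

lemma shuffle_sets_left_1: "shuffle_sets 1 r = (\<lambda>t. {t}) ` {..r}"
proof (intro set_eqI iffI)
  fix S assume "S \<in> shuffle_sets 1 r"
  hence S: "S \<subseteq> {0..<Suc r}" "card S = 1" by (auto simp: shuffle_sets_def)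
  then obtain t where "S = {t}" by (elim card_1_singletonE)
  thus "S \<in> (\<lambda>t. {t}) ` {..r}" using S by auto
next
  fix S assume "S \<in> (\<lambda>t. {t}) ` {..r}"
  thus "S \<in> shuffle_sets 1 r" by (auto simp: shuffle_sets_def)
qed

lemma shuffle_word_right_letter:
  assumes "t \<le> length u"
  shows "shuffle_word ({0..<Suc (length u)} - {t}) u [a] = insert_at t a u"
proof (rule nth_equalityI)
  fix i assume "i < length (shuffle_word ({0..<Suc (length u)} - {t}) u [a])"
  hence i: "i \<le> length u" by (simp add: shuffle_word_def)
  have T: "{0..<length u + length [a]} - ({0..<Suc (length u)} - {t}) = {t}" using assms by auto
  show "shuffle_word ({0..<Suc (length u)} - {t}) u [a] ! i = insert_at t a u ! i"
    using i assms unfolding shuffle_word_def T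
    by (simp add: nth_append insert_at_nth rnk_remove_point del: upt_Suc)
qed (use assms in \<open>simp add: shuffle_word_def\<close>)

lemma shuffle_word_left_letter:
  assumes "t \<le> length u"
  shows "shuffle_word {t} [a] u = insert_at t a u"
proof (rule nth_equalityI)
  fix i assume "i < length (shuffle_word {t} [a] u)"
  hence i: "i \<le> length u" by (simp add: shuffle_word_def)
  have T: "{0..<length [a] + length u} - {t} = {0..<Suc (length u)} - {t}" by simp
  show "shuffle_word {t} [a] u ! i = insert_at t a u ! i"
    using i assms unfolding shuffle_word_def T
    by (simp add: nth_append insert_at_nth rnk_remove_point del: upt_Suc)
qed (use assms in \<open>simp add: shuffle_word_def\<close>)

lemma prod_list_map_drop: "(\<Prod>x\<leftarrow>drop t u. f x) = (\<Prod>i\<in>{t..<length u}. f (u ! i))"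
proof -
  have "drop t u = map ((!) u) [t..<length u]" by (rule nth_equalityI) auto
  thus ?thesis by (simp add: prod.distinct_set_conv_list[symmetric] comp_def)
qed

lemma prod_list_map_take:
  "t \<le> length u \<Longrightarrow> (\<Prod>x\<leftarrow>take t u. f x) = (\<Prod>i\<in>{0..<t}. f (u ! i))"
proof -
  assume "t \<le> length u"
  hence "take t u = map ((!) u) [0..<t]" by (intro nth_equalityI) auto
  thus ?thesis by (simp add: prod.distinct_set_conv_list[symmetric] comp_def)
qed

lemma shuffle_coeff_right_letter:
  assumes "t \<le> length u"
  shows "shuffle_coeff p ({0..<Suc (length u)} - {t}) u [a] = (\<Prod>x\<leftarrow>drop t u. inverse (p a x))"
proof -
  let ?S = "{0..<Suc (length u)} - {t}"
  have T: "{0..<length u + length [a]} - ?S = {t}" using assms by auto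
  have P: "{(i,j). i \<in> ?S \<and> j \<in> {t} \<and> j < i} = (\<lambda>i. (i,t)) ` Suc ` {t..<length u}"
    by (auto simp: image_Suc_atLeastLessThan)
  have "shuffle_coeff p ?S u [a] = (\<Prod>i\<in>Suc ` {t..<length u}. inverse (p a (u ! rnk ?S i)))"
    unfolding shuffle_coeff_def Let_def T P by (subst prod.reindex) (auto simp: inj_on_def)
  also have "\<dots> = (\<Prod>i\<in>{t..<length u}. inverse (p a (u ! i)))"
    using assms by (subst prod.reindex) (auto simp: rnk_remove_point)
  finally show ?thesis by (simp add: prod_list_map_drop)
qed

lemma shuffle_coeff_left_letter:
  assumes "t \<le> length u"
  shows "shuffle_coeff p {t} [a] u = (\<Prod>x\<leftarrow>take t u. inverse (p x a))"
proof -
  let ?T = "{0..<Suc (length u)} - {t}"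
  have T: "{0..<length [a] + length u} - {t} = ?T" by simp
  have P: "{(i,j). i \<in> {t} \<and> j \<in> ?T \<and> j < i} = (\<lambda>j. (t,j)) ` {0..<t}" using assms by auto
  have "shuffle_coeff p {t} [a] u = (\<Prod>j\<in>{0..<t}. inverse (p (u ! rnk ?T j) a))"
    unfolding shuffle_coeff_def Let_def T P by (subst prod.reindex) (auto simp: inj_on_def)
  also have "\<dots> = (\<Prod>j\<in>{0..<t}. inverse (p (u ! j) a))"
    by (rule prod.cong) (use assms in \<open>auto simp: rnk_remove_point\<close>)
  finally show ?thesis using assms by (simp add: prod_list_map_take)
qed

lemma image_Collect_filter: "{S \<in> f ` A. P S} = f ` {t\<in>A. P (f t)}"
  by auto

lemma shuf_basis_right_letter:
  "shuf_basis p u [a] = insertion_sum (\<lambda>t. \<Prod>x\<leftarrow>drop t u. inverse (p a x)) a u"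
proof
  fix w
  let ?f = "\<lambda>t. {0..<Suc (length u)} - {t}"
  let ?I = "{t. t \<le> length u \<and> insert_at t a u = w}"
  have inj: "inj_on ?f ?I"
  proof (rule inj_onI)
    fix x y assume "x \<in> ?I" "y \<in> ?I" "?f x = ?f y"
    have "x \<notin> ?f x" by simp
    hence "x \<notin> ?f y" using \<open>?f x = ?f y\<close> by simp
    thus "x = y" using \<open>x \<in> ?I\<close> by auto
  qed
  have ss: "shuffle_sets (length u) (length [a]) = ?f ` {..length u}"
    using shuffle_sets_right_1[of "length u"] by simp
  have e: "{t\<in>{..length u}. shuffle_word (?f t) u [a] = w} = ?I"
    using shuffle_word_right_letter by auto
  have "{S\<in>shuffle_sets (length u) (length [a]). shuffle_word S u [a] = w} = ?f ` ?I"
    unfolding ss image_Collect_filter e ..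
  hence "shuf_basis p u [a] w = (\<Sum>S\<in>?f ` ?I. shuffle_coeff p S u [a])"
    by (simp only: shuf_basis_def)
  also have "\<dots> = (\<Sum>t\<in>?I. shuffle_coeff p (?f t) u [a])"
    by (rule sum.reindex[OF inj, unfolded comp_def])
  also have "\<dots> = insertion_sum (\<lambda>t. \<Prod>x\<leftarrow>drop t u. inverse (p a x)) a u w"
    unfolding insertion_sum_def by (rule sum.cong) (auto simp: shuffle_coeff_right_letter)
  finally show "shuf_basis p u [a] w = \<dots>" .
qed

lemma shuf_basis_left_letter:
  "shuf_basis p [a] u = insertion_sum (\<lambda>t. \<Prod>x\<leftarrow>take t u. inverse (p x a)) a u"
proof
  fix w
  let ?I = "{t. t \<le> length u \<and> insert_at t a u = w}"
  have ss: "shuffle_sets (length [a]) (length u) = (\<lambda>t. {t}) ` {..length u}"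
    using shuffle_sets_left_1[of "length u"] by simp
  have e: "{t\<in>{..length u}. shuffle_word {t} [a] u = w} = ?I"
    using shuffle_word_left_letter by auto
  have "{S\<in>shuffle_sets (length [a]) (length u). shuffle_word S [a] u = w} = (\<lambda>t. {t}) ` ?I"
    unfolding ss image_Collect_filter e ..
  hence "shuf_basis p [a] u w = (\<Sum>S\<in>(\<lambda>t. {t}) ` ?I. shuffle_coeff p S [a] u)"
    by (simp only: shuf_basis_def)
  also have "\<dots> = (\<Sum>t\<in>?I. shuffle_coeff p {t} [a] u)"
    by (rule sum.reindex[unfolded comp_def]) (auto simp: inj_on_def)
  also have "\<dots> = insertion_sum (\<lambda>t. \<Prod>x\<leftarrow>take t u. inverse (p x a)) a u w"
    unfolding insertion_sum_def by (rule sum.cong) (auto simp: shuffle_coeff_left_letter)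
  finally show "shuf_basis p [a] u w = \<dots>" .
qed

lemma sh_mult_smult_mono:
  "sh_mult p (sh_smult c (sh_mono u)) (sh_smult d (sh_mono v)) = sh_smult (c * d) (shuf_basis p u v)"
proof -
  have nz: "{x. e * sh_mono w x \<noteq> 0} = (if e = 0 then {} else {w})" for e :: 'a and w
    by (auto simp: sh_mono_def)
  show ?thesis unfolding sh_mult_def sh_smult_def nz by (rule ext) (simp add: sh_mono_def)
qed

lemma sh_mono_eq_smult_1: "sh_mono w = sh_smult 1 (sh_mono w)"
  by (simp add: sh_smult_def)

definition p_letter_word :: "(nat \<Rightarrow> nat \<Rightarrow> 'a::field) \<Rightarrow> nat \<Rightarrow> nat list \<Rightarrow> 'a" where
  "p_letter_word p a l = (\<Prod>x\<leftarrow>l. p a x)"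

definition p_word_letter :: "(nat \<Rightarrow> nat \<Rightarrow> 'a::field) \<Rightarrow> nat \<Rightarrow> nat list \<Rightarrow> 'a" where
  "p_word_letter p a l = (\<Prod>x\<leftarrow>l. p x a)"

definition braiding :: "(nat \<Rightarrow> nat \<Rightarrow> 'a::field) \<Rightarrow> nat \<Rightarrow> nat list \<Rightarrow> 'a" where
  "braiding p a l = (\<Prod>x\<leftarrow>l. p a x * p x a)"

lemma p_letter_word_simps [simp]:
  "p_letter_word p a [] = 1" "p_letter_word p a (x # l) = p a x * p_letter_word p a l"
  "p_letter_word p a (l1 @ l2) = p_letter_word p a l1 * p_letter_word p a l2"
  "p_letter_word p a (rev l) = p_letter_word p a l"
  by (simp_all add: p_letter_word_def prod_list.rev rev_map[symmetric])

lemma p_word_letter_simps [simp]: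
  "p_word_letter p a [] = 1" "p_word_letter p a (x # l) = p x a * p_word_letter p a l"
  "p_word_letter p a (l1 @ l2) = p_word_letter p a l1 * p_word_letter p a l2"
  "p_word_letter p a (rev l) = p_word_letter p a l"
  by (simp_all add: p_word_letter_def prod_list.rev rev_map[symmetric])

lemma braiding_simps [simp]:
  "braiding p a [] = 1" "braiding p a (x # l) = p a x * p x a * braiding p a l"
  "braiding p a (l1 @ l2) = braiding p a l1 * braiding p a l2"
  "braiding p a (rev l) = braiding p a l"
  by (simp_all add: braiding_def prod_list.rev rev_map[symmetric])

lemma braiding_eq: "braiding p a l = p_letter_word p a l * p_word_letter p a l"
  by (induction l) (simp_all add: ac_simps)

lemma pw_letter_right: "pw p u [a] = p_word_letter p a u"
  by (simp add: pw_def p_word_letter_def prod.list_conv_set_nth atLeast0LessThan)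

lemma pw_letter_left: "pw p [b] u = p_letter_word p b u"
  by (simp add: pw_def p_letter_word_def prod.list_conv_set_nth atLeast0LessThan)

lemma p_letter_word_map_upt: "p_letter_word p a (map f [k..<m]) = (\<Prod>i\<in>{k..<m}. p a (f i))"
  using prod.distinct_set_conv_list[of "[k..<m]" "\<lambda>i. p a (f i)"]
  by (simp add: p_letter_word_def comp_def)

lemma p_word_letter_map_upt: "p_word_letter p a (map f [k..<m]) = (\<Prod>i\<in>{k..<m}. p (f i) a)"
  using prod.distinct_set_conv_list[of "[k..<m]" "\<lambda>i. p (f i) a"]
  by (simp add: p_word_letter_def comp_def)

lemma prod_list_inverse: "(\<Prod>x\<leftarrow>l. inverse (f x)) = inverse (\<Prod>x\<leftarrow>l. f x :: 'a::field)"
  by (induction l) (simp_all add: inverse_mult_distrib)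

text \<open>The coefficient of insert_at t a u in u a - c p(u,a) a u, resp. of insert_at t b u in
  b u - c p(b,u) u b, computed in the shuffle algebra (see sh_bracket_mono_letter).\<close>
definition left_coeff :: "(nat \<Rightarrow> nat \<Rightarrow> 'a::field) \<Rightarrow> 'a \<Rightarrow> nat \<Rightarrow> nat list \<Rightarrow> nat \<Rightarrow> 'a" where
  "left_coeff p c a u t = p_word_letter p a (drop t u) * (inverse (braiding p a (drop t u)) - c)"

definition right_coeff :: "(nat \<Rightarrow> nat \<Rightarrow> 'a::field) \<Rightarrow> 'a \<Rightarrow> nat \<Rightarrow> nat list \<Rightarrow> nat \<Rightarrow> 'a" where
  "right_coeff p c b u t = p_letter_word p b (take t u) * (inverse (braiding p b (take t u)) - c)"

lemma left_coeff_eq: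
  assumes "\<forall>x\<in>set u. p a x \<noteq> 0 \<and> p x a \<noteq> 0"
  shows "(\<Prod>x\<leftarrow>drop t u. inverse (p a x)) - c * p_word_letter p a u * (\<Prod>x\<leftarrow>take t u. inverse (p x a))
         = left_coeff p c a u t"
proof -
  have u: "p_word_letter p a u = p_word_letter p a (take t u) * p_word_letter p a (drop t u)"
    by (metis append_take_drop_id p_word_letter_simps(3))
  have "p_word_letter p a (take t u) \<noteq> 0" "p_word_letter p a (drop t u) \<noteq> 0"
       "p_letter_word p a (drop t u) \<noteq> 0"
    using assms by (auto simp: p_word_letter_def p_letter_word_def prod_list_zero_iff dest: in_set_takeD in_set_dropD)
  thus ?thesis
    unfolding left_coeff_def prod_list_inverse u braiding_eq
    by (simp add: p_word_letter_def[symmetric] p_letter_word_def[symmetric] field_simps)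
qed

lemma right_coeff_eq:
  assumes "\<forall>x\<in>set u. p b x \<noteq> 0 \<and> p x b \<noteq> 0"
  shows "(\<Prod>x\<leftarrow>take t u. inverse (p x b)) - c * p_letter_word p b u * (\<Prod>x\<leftarrow>drop t u. inverse (p b x))
         = right_coeff p c b u t"
proof -
  have u: "p_letter_word p b u = p_letter_word p b (take t u) * p_letter_word p b (drop t u)"
    by (metis append_take_drop_id p_letter_word_simps(3))
  have "p_word_letter p b (take t u) \<noteq> 0" "p_letter_word p b (drop t u) \<noteq> 0"
       "p_letter_word p b (take t u) \<noteq> 0"
    using assms by (auto simp: p_word_letter_def p_letter_word_def prod_list_zero_iff dest: in_set_takeD in_set_dropD)
  thus ?thesis
    unfolding right_coeff_def prod_list_inverse u braiding_eq
    by (simp add: p_word_letter_def[symmetric] p_letter_word_def[symmetric] field_simps)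
qed

lemma sh_bracket_mono_letter:
  assumes "\<forall>x\<in>set u. p a x \<noteq> 0 \<and> p x a \<noteq> 0"
  shows "sh_sub (sh_mult p (sh_smult \<alpha> (sh_mono u)) (sh_mono [a]))
           (sh_smult (c * p_word_letter p a u) (sh_mult p (sh_mono [a]) (sh_smult \<alpha> (sh_mono u))))
         = sh_smult \<alpha> (insertion_sum (left_coeff p c a u) a u)"
proof -
  have "sh_mult p (sh_smult \<alpha> (sh_mono u)) (sh_mono [a]) = sh_smult \<alpha> (shuf_basis p u [a])"
    and "sh_mult p (sh_mono [a]) (sh_smult \<alpha> (sh_mono u)) = sh_smult \<alpha> (shuf_basis p [a] u)"
    by (subst sh_mono_eq_smult_1[of "[a]"], simp only: sh_mult_smult_mono mult_1_left mult_1_right)+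
  thus ?thesis
    by (simp add: shuf_basis_right_letter shuf_basis_left_letter left_coeff_eq[OF assms, symmetric]
        fun_eq_iff sh_sub_def sh_smult_def insertion_sum_def sum_subtractf sum_distrib_left algebra_simps)
qed

lemma sh_bracket_letter_mono:
  assumes "\<forall>x\<in>set u. p b x \<noteq> 0 \<and> p x b \<noteq> 0"
  shows "sh_sub (sh_mult p (sh_mono [b]) (sh_smult \<alpha> (sh_mono u)))
           (sh_smult (c * p_letter_word p b u) (sh_mult p (sh_smult \<alpha> (sh_mono u)) (sh_mono [b])))
         = sh_smult \<alpha> (insertion_sum (right_coeff p c b u) b u)"
proof -
  have "sh_mult p (sh_mono [b]) (sh_smult \<alpha> (sh_mono u)) = sh_smult \<alpha> (shuf_basis p [b] u)"
    and "sh_mult p (sh_smult \<alpha> (sh_mono u)) (sh_mono [b]) = sh_smult \<alpha> (shuf_basis p u [b])"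
    by (subst sh_mono_eq_smult_1[of "[b]"], simp only: sh_mult_smult_mono mult_1_left mult_1_right)+
  thus ?thesis
    by (simp add: shuf_basis_right_letter shuf_basis_left_letter right_coeff_eq[OF assms, symmetric]
        fun_eq_iff sh_sub_def sh_smult_def insertion_sum_def sum_subtractf sum_distrib_left algebra_simps)
qed

section \<open>Cancellation in insertion sums\<close>

lemma insertion_sum_cancelling:
  fixes D :: "nat \<Rightarrow> 'a::field"
  assumes t0: "t0 \<le> length u" and Z: "Z \<subseteq> {..length u}" "t0 \<notin> Z"
    and zero: "\<And>t. t \<le> length u \<Longrightarrow> t \<noteq> t0 \<Longrightarrow> t \<notin> Z \<Longrightarrow> D t = 0"
    and sum_Z: "sum D Z = 0"
    and same: "\<And>t. t \<in> Z \<Longrightarrow> insert_at t a u = v" and ne: "insert_at t0 a u \<noteq> v"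
  shows "insertion_sum D a u = sh_smult (D t0) (sh_mono (insert_at t0 a u))"
proof
  fix w
  let ?I = "{t. t \<le> length u \<and> insert_at t a u = w}"
  have "insertion_sum D a u w = (\<Sum>t\<in>?I \<inter> insert t0 Z. D t)"
    unfolding insertion_sum_def by (rule sum.mono_neutral_right) (auto intro: zero)
  also have "\<dots> = sh_smult (D t0) (sh_mono (insert_at t0 a u)) w"
  proof -
    consider "w = insert_at t0 a u" | "w = v" | "w \<noteq> insert_at t0 a u" "w \<noteq> v" by blast
    thus ?thesis
    proof cases
      case 1
      have "t \<notin> ?I" if "t \<in> Z" for t using that same ne 1 by auto
      hence "?I \<inter> insert t0 Z = {t0}" using t0 1 by auto
      thus ?thesis using 1 by (simp add: sh_smult_def sh_mono_def)
    next
      case 2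
      hence "?I \<inter> insert t0 Z = Z" using Z same ne by auto
      thus ?thesis using 2 ne sum_Z by (simp add: sh_smult_def sh_mono_def)
    next
      case 3
      hence "?I \<inter> insert t0 Z = {}" using same by auto
      thus ?thesis using 3 by (simp add: sh_smult_def sh_mono_def)
    qed
  qed
  finally show "insertion_sum D a u w = \<dots>" .
qed

lemma insertion_sum_single:
  fixes D :: "nat \<Rightarrow> 'a::field"
  assumes "t0 \<le> length u" and "\<And>t. t \<le> length u \<Longrightarrow> t \<noteq> t0 \<Longrightarrow> D t = 0"
  shows "insertion_sum D a u = sh_smult (D t0) (sh_mono (insert_at t0 a u))"
  by (rule insertion_sum_cancelling[where Z="{}" and v="insert_at t0 a u @ [a]"]) (use assms in auto)

text \<open>Inserting a directly before or directly after an occurrence of a in u gives the same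
  word, so the two corresponding coefficients combine.\<close>

lemma insertion_sum_cancel_front:
  fixes D :: "nat \<Rightarrow> 'a::field"
  assumes u: "u = A @ a # C" and A: "A \<noteq> []" "hd A \<noteq> a"
    and zero: "\<And>t. t \<le> length u \<Longrightarrow> 0 < t \<Longrightarrow> t \<noteq> length A \<Longrightarrow> t \<noteq> Suc (length A) \<Longrightarrow> D t = 0"
    and cancel: "D (length A) + D (Suc (length A)) = 0"
  shows "insertion_sum D a u = sh_smult (D 0) (sh_mono (a # u))"
proof -
  have "insertion_sum D a u = sh_smult (D 0) (sh_mono (insert_at 0 a u))"
  proof (rule insertion_sum_cancelling[where Z="{length A, Suc (length A)}"])
    have "hd (insert_at (length A) a u) = hd A" using A u by (subst hd_insert_at) auto
    thus "insert_at 0 a u \<noteq> insert_at (length A) a u" using A by (metis insert_at_0 list.sel(1))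
    show "\<And>t. t \<in> {length A, Suc (length A)} \<Longrightarrow> insert_at t a u = insert_at (length A) a u"
      using insert_at_around_occurrence[of A a C] u by auto
  qed (use u A zero cancel in auto)
  thus ?thesis by simp
qed

lemma insertion_sum_cancel_back:
  fixes D :: "nat \<Rightarrow> 'a::field"
  assumes u: "u = A @ b # C" and C: "C \<noteq> []" "last C \<noteq> b"
    and zero: "\<And>t. t < length u \<Longrightarrow> t \<noteq> length A \<Longrightarrow> t \<noteq> Suc (length A) \<Longrightarrow> D t = 0"
    and cancel: "D (length A) + D (Suc (length A)) = 0"
  shows "insertion_sum D b u = sh_smult (D (length u)) (sh_mono (u @ [b]))"
proof -
  have "insertion_sum D b u = sh_smult (D (length u)) (sh_mono (insert_at (length u) b u))"
  proof (rule insertion_sum_cancelling[where Z="{length A, Suc (length A)}"])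
    have "last (insert_at (length A) b u) = last C" using C u by (subst last_insert_at) auto
    thus "insert_at (length u) b u \<noteq> insert_at (length A) b u" using C by (metis insert_at_length last_snoc)
    show "\<And>t. t \<in> {length A, Suc (length A)} \<Longrightarrow> insert_at t b u = insert_at (length A) b u"
      using insert_at_around_occurrence[of A b C] u by auto
  qed (use u C zero cancel in auto)
  thus ?thesis by simp
qed

lemma gidx_le [simp]: "i \<le> n \<Longrightarrow> gidx n i = i"
  by (simp add: gidx_def)

lemma gidx_gt: "n < i \<Longrightarrow> gidx n i = 2*n - i"
  by (simp add: gidx_def)

lemma gidx_bounds: "c \<le> i \<Longrightarrow> i + c \<le> 2*n \<Longrightarrow> c \<le> gidx n i \<and> gidx n i \<le> n"
  by (auto simp: gidx_def)

lemma map_gidx_upt_le: "j \<le> Suc n \<Longrightarrow> map (gidx n) [i..<j] = [i..<j]"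
  by (rule map_idI) (auto simp: gidx_def)

lemma map_gidx_rev_upt_gt:
  "n < i \<Longrightarrow> i \<le> j \<Longrightarrow> j \<le> 2*n \<Longrightarrow> map (gidx n) (rev [i..<j]) = [2*n+1-j..<2*n+1-i]"
proof (induction j)
  case (Suc j)
  show ?case
  proof (cases "i = Suc j")
    case False
    hence "i \<le> j" using Suc by simp
    hence "map (gidx n) (rev [i..<Suc j]) = (2*n - j) # [Suc (2*n - j)..<2*n+1-i]"
      using Suc by (simp add: gidx_gt Suc_diff_le)
    also have "\<dots> = [2*n+1-Suc j..<2*n+1-i]"
      using Suc \<open>i \<le> j\<close> by (simp add: upt_conv_Cons)
    finally show ?thesis .
  qed simp
qed simp

lemma upt_split: "i \<le> j \<Longrightarrow> j \<le> k \<Longrightarrow> [i..<k] = [i..<j] @ [j..<k]"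
  using upt_add_eq_append[of i j "k - j"] by simp

lemma set_vword_bounds: "1 \<le> k \<Longrightarrow> m < 2*n \<Longrightarrow> x \<in> set (vword n k m) \<Longrightarrow> 1 \<le> x \<and> x \<le> n"
  unfolding vword_def using gidx_bounds[of 1 _ n] by auto

text \<open>The palindrome s+1, ..., n-1, n, n-1, ..., s+1, i.e. the letters of v(s+1, 2n-s-1).\<close>
definition reflected_word :: "nat \<Rightarrow> nat \<Rightarrow> nat list" where
  "reflected_word n s = [Suc s..<n] @ n # rev [Suc s..<n]"

lemma rev_reflected_word [simp]: "rev (reflected_word n s) = reflected_word n s"
  by (simp add: reflected_word_def)

lemma set_reflected_word: "s < n \<Longrightarrow> set (reflected_word n s) = {Suc s..n}"
  by (auto simp: reflected_word_def)

lemma reflected_word_last: "Suc s = n \<Longrightarrow> reflected_word n s = [n]"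
  by (simp add: reflected_word_def)

lemma reflected_word_Suc:
  "Suc s < n \<Longrightarrow> reflected_word n s = Suc s # reflected_word n (Suc s) @ [Suc s]"
  by (simp add: reflected_word_def upt_conv_Cons)

lemma map_gidx_reflected:
  assumes "s < n"
  shows "map (gidx n) [Suc s..<2*n - s] = reflected_word n s"
proof -
  have "[Suc s..<2*n - s] = [Suc s..<n] @ [n..<2*n - s]"
    using assms by (intro upt_split) auto
  also have "[n..<2*n - s] = n # [Suc n..<2*n - s]"
    using assms by (intro upt_conv_Cons) auto
  finally have "[Suc s..<2*n - s] = [Suc s..<n] @ n # [Suc n..<2*n - s]" .
  moreover have "rev (map (gidx n) [Suc n..<2*n - s]) = [Suc s..<n]"
    using map_gidx_rev_upt_gt[of n "Suc n" "2*n - s"] assms by (simp add: rev_map)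
  hence "map (gidx n) [Suc n..<2*n - s] = rev [Suc s..<n]"
    by (metis rev_rev_ident)
  ultimately show ?thesis using assms by (simp add: map_gidx_upt_le reflected_word_def)
qed

lemma rev_map_gidx_reflected_front:
  assumes "k \<le> s" "s < n"
  shows "rev (map (gidx n) [k..<2*n - s]) = reflected_word n s @ s # rev [k..<s]"
proof -
  have "[k..<2*n - s] = [k..<s] @ [s..<2*n - s]"
    using assms by (intro upt_split) auto
  also have "[s..<2*n - s] = s # [Suc s..<2*n - s]"
    using assms by (intro upt_conv_Cons) auto
  finally have "[k..<2*n - s] = [k..<s] @ s # [Suc s..<2*n - s]" .
  thus ?thesis using assms by (simp add: map_gidx_reflected map_gidx_upt_le)
qed

lemma rev_map_gidx_reflected_back:
  assumes "0 < s" "s \<le> k" "k < n" "m = 2*n - s"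
  shows "rev (map (gidx n) [Suc k..<Suc m]) = [s..<k] @ k # reflected_word n k"
proof -
  have "[Suc k..<Suc m] = [Suc k..<Suc n] @ [Suc n..<Suc m]"
    using assms by (intro upt_split) auto
  moreover have "map (gidx n) (rev [Suc n..<Suc m]) = [s..<n]"
    using map_gidx_rev_upt_gt[of n "Suc n" "Suc m"] assms by simp
  moreover have "[s..<n] = [s..<k] @ [k..<n]"
    using assms by (intro upt_split) auto
  moreover have "[k..<n] = k # [Suc k..<n]"
    using assms by (intro upt_conv_Cons) auto
  ultimately show ?thesis using assms by (simp add: map_gidx_upt_le reflected_word_def rev_map)
qed

lemma rev_map_gidx_upt_high:
  assumes "n \<le> k" "k \<le> m" "m < 2*n"
  shows "rev (map (gidx n) [Suc k..<Suc m]) = [2*n - m..<2*n - k]"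
  using map_gidx_rev_upt_gt[of n "Suc k" "Suc m"] assms by (simp add: rev_map)

definition p_pairs :: "(nat \<Rightarrow> nat \<Rightarrow> 'a::field) \<Rightarrow> nat \<Rightarrow> nat \<Rightarrow> nat \<Rightarrow> 'a" where
  "p_pairs p n k m = (\<Prod>(i,j)\<in>{(i,j). k \<le> i \<and> i < j \<and> j \<le> m}. p (gidx n i) (gidx n j))"

lemma alpha_eq_p_pairs: "alpha p q n k m = eps q n k m * (q - 1) ^ (m - k) * p_pairs p n k m"
  by (simp add: alpha_def p_pairs_def)

lemma alpha_same [simp]: "alpha p q n k k = 1"
proof -
  have E: "{(i,j). k \<le> i \<and> i < j \<and> j \<le> k} = {}" by auto
  have "eps q n k k = 1" unfolding eps_def phi_def by auto
  thus ?thesis unfolding alpha_def E by simp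
qed

lemma finite_index_pairs: "finite {(i,j). k \<le> i \<and> i < j \<and> j \<le> (m::nat)}"
  by (rule finite_subset[of _ "{..m} \<times> {..m}"]) auto

lemma p_pairs_Suc_right:
  assumes "k \<le> m"
  shows "p_pairs p n k (Suc m) = p_pairs p n k m * (\<Prod>i\<in>{k..<Suc m}. p (gidx n i) (gidx n (Suc m)))"
proof -
  have "{(i,j). k \<le> i \<and> i < j \<and> j \<le> Suc m} =
        {(i,j). k \<le> i \<and> i < j \<and> j \<le> m} \<union> (\<lambda>i. (i, Suc m)) ` {k..<Suc m}"
    by auto
  hence "p_pairs p n k (Suc m) = p_pairs p n k m
      * (\<Prod>x\<in>(\<lambda>i. (i, Suc m)) ` {k..<Suc m}. case x of (i,j) \<Rightarrow> p (gidx n i) (gidx n j))"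
    unfolding p_pairs_def by (simp only:) (rule prod.union_disjoint, auto simp: finite_index_pairs)
  thus ?thesis by (simp add: prod.reindex inj_on_def)
qed

lemma p_pairs_Suc_left:
  assumes "k < m"
  shows "p_pairs p n k m = p_pairs p n (Suc k) m * (\<Prod>j\<in>{Suc k..<Suc m}. p (gidx n k) (gidx n j))"
proof -
  have "{(i,j). k \<le> i \<and> i < j \<and> j \<le> m} =
        {(i,j). Suc k \<le> i \<and> i < j \<and> j \<le> m} \<union> (\<lambda>j. (k, j)) ` {Suc k..<Suc m}"
    by auto
  hence "p_pairs p n k m = p_pairs p n (Suc k) m
      * (\<Prod>x\<in>(\<lambda>j. (k, j)) ` {Suc k..<Suc m}. case x of (i,j) \<Rightarrow> p (gidx n i) (gidx n j))"
    unfolding p_pairs_def by (simp only:) (rule prod.union_disjoint, auto simp: finite_index_pairs)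
  thus ?thesis by (simp add: prod.reindex inj_on_def)
qed

lemma alpha_Suc_right:
  assumes "k \<le> m" and eps: "eps q n k m * e = eps q n k (Suc m) * (q - 1)"
  shows "alpha p q n k m * (p_word_letter p (gidx n (Suc m)) (rev (map (gidx n) [k..<Suc m])) * e)
         = alpha p q n k (Suc m)"
proof -
  have "alpha p q n k m * (p_word_letter p (gidx n (Suc m)) (rev (map (gidx n) [k..<Suc m])) * e)
      = (q - 1) ^ (m - k) * p_pairs p n k m * (\<Prod>i\<in>{k..<Suc m}. p (gidx n i) (gidx n (Suc m)))
          * (eps q n k m * e)"
    by (simp add: alpha_eq_p_pairs p_word_letter_map_upt ac_simps)
  also have "\<dots> = alpha p q n k (Suc m)"
    using assms by (simp add: alpha_eq_p_pairs p_pairs_Suc_right Suc_diff_le ac_simps)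
  finally show ?thesis .
qed

lemma alpha_Suc_left:
  assumes "k < m" and eps: "eps q n (Suc k) m * e = eps q n k m * (q - 1)"
  shows "alpha p q n (Suc k) m * (p_letter_word p (gidx n k) (rev (map (gidx n) [Suc k..<Suc m])) * e)
         = alpha p q n k m"
proof -
  have "alpha p q n (Suc k) m * (p_letter_word p (gidx n k) (rev (map (gidx n) [Suc k..<Suc m])) * e)
      = (q - 1) ^ (m - Suc k) * p_pairs p n (Suc k) m * (\<Prod>j\<in>{Suc k..<Suc m}. p (gidx n k) (gidx n j))
          * (eps q n (Suc k) m * e)"
    by (simp add: alpha_eq_p_pairs p_letter_word_map_upt ac_simps)
  also have "\<dots> = alpha p q n k m"
  proof -
    have "m - k = Suc (m - Suc k)" using assms by simp
    thus ?thesis using assms by (simp add: alpha_eq_p_pairs p_pairs_Suc_left[of k m] ac_simps)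
  qed
  finally show ?thesis .
qed

lemma sh_smult_smult [simp]: "sh_smult a (sh_smult b f) = sh_smult (a * b) f"
  by (simp add: sh_smult_def mult.assoc)

lemma vleft_Suc_eq_insertion_sum:
  assumes IH: "vleft p n k d = sh_smult \<alpha> (sh_mono u)"
    and u: "u = rev (vword n k (k + d))" and a: "a = gidx n (k + Suc d)"
    and nz: "\<forall>x\<in>set u. p a x \<noteq> 0 \<and> p x a \<noteq> 0"
  shows "vleft p n k (Suc d) = sh_smult \<alpha> (insertion_sum (left_coeff p 1 a u) a u)"
proof -
  have "pw p (vword n k (k + d)) [a] = 1 * p_word_letter p a u"
    by (simp add: pw_letter_right u)
  thus ?thesis
    using sh_bracket_mono_letter[OF nz, of \<alpha> 1] by (simp add: sh_br_def IH shx_def a)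
qed

lemma vright_Suc_eq_insertion_sum:
  assumes IH: "vright p n m d = sh_smult \<alpha> (sh_mono u)"
    and u: "u = rev (vword n (m - d) m)" and b: "b = gidx n (m - Suc d)"
    and nz: "\<forall>x\<in>set u. p b x \<noteq> 0 \<and> p x b \<noteq> 0"
  shows "vright p n m (Suc d) = sh_smult \<alpha> (insertion_sum (right_coeff p 1 b u) b u)"
proof -
  have "pw p [b] (vword n (m - d) m) = 1 * p_letter_word p b u"
    by (simp add: pw_letter_left u)
  thus ?thesis
    using sh_bracket_letter_mono[OF nz, of \<alpha> 1] by (simp add: sh_br_def IH shx_def b)
qed

lemma vbr_phi_eq_insertion_sum:
  assumes m: "m = phi n k" "k \<noteq> m"
    and IH: "vleft p n k (m - 1 - k) = sh_smult \<alpha> (sh_mono u)"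
    and u: "u = rev (vword n k (m - 1))" and a: "a = gidx n m"
    and nz: "\<forall>x\<in>set u. p a x \<noteq> 0 \<and> p x a \<noteq> 0"
  shows "vbr p q n k m = sh_smult \<alpha> (insertion_sum (left_coeff p (inverse q) a u) a u)"
proof -
  have ne: "k \<noteq> m" "\<not> m < phi n k" "\<not> phi n k < m" using m by auto
  have "pw p (vword n k (m - 1)) [a] = p_word_letter p a u"
    by (simp add: pw_letter_right u)
  hence "vbr p q n k m = sh_sub (sh_mult p (sh_smult \<alpha> (sh_mono u)) (sh_mono [a]))
      (sh_smult (inverse q * p_word_letter p a u) (sh_mult p (sh_mono [a]) (sh_smult \<alpha> (sh_mono u))))"
    unfolding vbr_def by (simp only: ne if_False IH shx_def a[symmetric])
  thus ?thesis by (simp only: sh_bracket_mono_letter[OF nz])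
qed

section \<open>The structure constants of U_q^+(sp_2n)\<close>

locale sp_braiding =
  fixes p :: "nat \<Rightarrow> nat \<Rightarrow> 'a::field" and q :: 'a and n :: nat
  assumes p_nonzero: "\<And>i j. 1 \<le> i \<Longrightarrow> i \<le> n \<Longrightarrow> 1 \<le> j \<Longrightarrow> j \<le> n \<Longrightarrow> p i j \<noteq> 0"
    and q_nonzero: "q \<noteq> 0"
    and p_diag: "\<And>i. 1 \<le> i \<Longrightarrow> i < n \<Longrightarrow> p i i = q"
    and p_adjacent: "\<And>i. 1 < i \<Longrightarrow> i < n \<Longrightarrow> p i (i - 1) * p (i - 1) i = inverse q"
    and p_adjacent_last: "p (n - 1) n * p n (n - 1) = inverse (q ^ 2)"
    and p_distant: "\<And>i j. 1 \<le> i \<Longrightarrow> i + 1 < j \<Longrightarrow> j \<le> n \<Longrightarrow> p i j * p j i = 1"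
begin

lemma braiding_distant:
  assumes "\<And>x. x \<in> set l \<Longrightarrow> 1 \<le> x \<and> x \<le> n \<and> (a + 1 < x \<or> x + 1 < a)" "1 \<le> a" "a \<le> n"
  shows "braiding p a l = 1"
  using assms
proof (induction l)
  case (Cons x l)
  hence "p a x * p x a = 1"
    using p_distant[of a x] p_distant[of x a] by (auto simp: mult.commute)
  thus ?case using Cons by simp
qed simp

lemma braiding_upt_distant:
  assumes "1 \<le> k" "k + j < a" "a \<le> n"
  shows "braiding p a [k..<k + j] = 1"
  by (rule braiding_distant) (use assms in auto)

lemma braiding_upt_below:
  assumes "1 \<le> k" "k < a" "a \<le> n"
  shows "braiding p a [k..<a] = (if a = n then inverse (q ^ 2) else inverse q)"
proof -
  have "[k..<a] = [k..<k + (a - 1 - k)] @ [a - 1]"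
    using assms by (simp add: upt_Suc_append[symmetric])
  moreover have "p a (a - 1) * p (a - 1) a = (if a = n then inverse (q ^ 2) else inverse q)"
    using p_adjacent[of a] p_adjacent_last assms by (auto simp: mult.commute)
  ultimately show ?thesis using braiding_upt_distant[of k "a - 1 - k" a] assms by simp
qed

lemma braiding_reflected_word:
  assumes "1 \<le> s" "s < n"
  shows "braiding p s (reflected_word n s) = inverse (q ^ 2)"
    and "0 < t \<Longrightarrow> t < length (reflected_word n s) \<Longrightarrow> braiding p s (drop t (reflected_word n s)) = inverse q"
    and "0 < t \<Longrightarrow> t < length (reflected_word n s) \<Longrightarrow> braiding p s (take t (reflected_word n s)) = inverse q"
proof -
  show "braiding p s (reflected_word n s) = inverse (q ^ 2)"
  proof (cases rule: linorder_cases[of "Suc s" n])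
    case greater
    thus ?thesis using assms by simp
  next
    case equal
    hence n: "n = Suc s" by simp
    show ?thesis using p_adjacent_last unfolding n by (simp add: reflected_word_def)
  next
    case less
    let ?M = "reflected_word n (Suc s)"
    have "braiding p s ?M = 1"
      by (rule braiding_distant) (use assms less in \<open>auto simp: set_reflected_word\<close>)
    moreover have "p s (Suc s) * p (Suc s) s = inverse q"
      using p_adjacent[of "Suc s"] assms less by (simp add: mult.commute)
    ultimately show ?thesis using less q_nonzero
      by (simp add: reflected_word_Suc power2_eq_square inverse_mult_distrib)
  qed
  assume t: "0 < t" "t < length (reflected_word n s)"
  have inner: "Suc s < n"
  proof (rule ccontr)
    assume "\<not> Suc s < n"
    hence "reflected_word n s = [n]" using assms by (intro reflected_word_last) simp
    thus False using t by simp
  qed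
  let ?M = "reflected_word n (Suc s)"
  have distant: "braiding p s l = 1" if "set l \<subseteq> set ?M" for l
    by (rule braiding_distant) (use assms inner that in \<open>auto simp: set_reflected_word\<close>)
  have adjacent: "p s (Suc s) * p (Suc s) s = inverse q"
    using p_adjacent[of "Suc s"] assms inner by (simp add: mult.commute)
  have "drop t (reflected_word n s) = drop (t - 1) ?M @ [Suc s]"
    using t inner by (cases t) (auto simp: reflected_word_Suc)
  thus "braiding p s (drop t (reflected_word n s)) = inverse q"
    using distant[of "drop (t - 1) ?M"] adjacent by (simp add: set_drop_subset)
  have "take t (reflected_word n s) = Suc s # take (t - 1) ?M"
    using t inner by (cases t) (auto simp: reflected_word_Suc)
  thus "braiding p s (take t (reflected_word n s)) = inverse q"
    using distant[of "take (t - 1) ?M"] adjacent by (simp add: set_take_subset)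
qed

lemma braiding_take_upt:
  assumes "1 \<le> k" "k < a" "a \<le> n" "j < a - k"
  shows "braiding p a (take j [k..<a]) = 1"
  using assms braiding_upt_distant[of k j a] by simp

lemma braiding_drop_rev_upt:
  assumes "1 \<le> k" "k < a" "a \<le> n" "0 < j"
  shows "braiding p a (drop j (rev [k..<a])) = 1"
proof -
  have "drop j (rev [k..<a]) = rev [k..<k + (a - k - j)]"
    using assms by (simp add: drop_rev)
  thus ?thesis using assms braiding_upt_distant[of k "a - k - j" a] by simp
qed

lemma insertion_sum_low_front:
  assumes "1 \<le> k" "k < a" "a \<le> n" and u: "u = rev [k..<a]"
  shows "insertion_sum (left_coeff p 1 a u) a u = sh_smult (left_coeff p 1 a u 0) (sh_mono (a # u))"
proof -
  have "left_coeff p 1 a u t = 0" if "0 < t" for t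
    using braiding_drop_rev_upt[OF assms(1-3) that] by (simp add: left_coeff_def u)
  thus ?thesis using insertion_sum_single[of 0 u "left_coeff p 1 a u" a] by simp
qed

lemma insertion_sum_low_back:
  assumes "1 \<le> s" "s < b" "b \<le> n" and u: "u = [s..<b]"
  shows "insertion_sum (right_coeff p 1 b u) b u
         = sh_smult (right_coeff p 1 b u (length u)) (sh_mono (u @ [b]))"
proof -
  have "right_coeff p 1 b u t = 0" if "t < length u" for t
    using braiding_take_upt[OF assms(1-3), of t] that by (simp add: right_coeff_def u)
  thus ?thesis using insertion_sum_single[of "length u" u "right_coeff p 1 b u" b] by force
qed

text \<open>Every proper suffix of reflected_word n s braids with s to q^-1, the letter s with itself
  to q^2 and the run below s to c^-1 q^-1, so dropping any t letters with 0 < t < length of the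
  reflected word leaves a word braiding with s to exactly c^-1.\<close>

lemma insertion_sum_reflected_front:
  assumes k: "1 \<le> k" "k \<le> s" "s < n" and u: "u = reflected_word n s @ s # rev [k..<s]"
    and c: "c * braiding p s (rev [k..<s]) = inverse q"
  shows "insertion_sum (left_coeff p c s u) s u = sh_smult (left_coeff p c s u 0) (sh_mono (s # u))"
proof -
  let ?A = "reflected_word n s" and ?C = "rev [k..<s]"
  let ?B = "braiding p s [k..<s]"
  have B: "?B = (if k = s then 1 else inverse q)"
    using braiding_upt_below[of k s] k by simp
  have Bq: "inverse ?B = q * c" and Bnz: "?B \<noteq> 0"
    using c B q_nonzero by (auto simp: field_simps)
  have cB: "c = inverse (q * ?B)"
    using c Bnz q_nonzero by (simp add: field_simps)
  have ss: "p s s = q" using p_diag k by simp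
  have A: "?A \<noteq> []" by (simp add: reflected_word_def)
  have "hd ?A \<in> {Suc s..n}" using k hd_in_set[OF A] by (simp add: set_reflected_word)
  show ?thesis
  proof (rule insertion_sum_cancel_front[OF u A])
    show "hd ?A \<noteq> s" using \<open>hd ?A \<in> {Suc s..n}\<close> by auto
    fix t assume t: "t \<le> length u" "0 < t" "t \<noteq> length ?A" "t \<noteq> Suc (length ?A)"
    show "left_coeff p c s u t = 0"
    proof (cases "t < length ?A")
      case True
      hence "braiding p s (drop t u) = q * ?B"
        using braiding_reflected_word(2)[of s t] k t q_nonzero
        by (simp add: u ss power2_eq_square field_simps)
      moreover have "inverse (q * ?B) = c" using Bq q_nonzero by (simp add: inverse_mult_distrib)
      ultimately show ?thesis by (simp add: left_coeff_def)
    next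
      case False
      hence j: "drop t u = drop (t - Suc (length ?A)) ?C" "0 < t - Suc (length ?A)"
        using t by (auto simp: u drop_Cons')
      hence "k < s" using t by (auto simp: u)
      hence "c = 1" "braiding p s (drop t u) = 1"
        using c B q_nonzero braiding_drop_rev_upt[of k s] j k by auto
      thus ?thesis by (simp add: left_coeff_def)
    qed
  next
    have "drop (length ?A) u = s # ?C" "drop (Suc (length ?A)) u = ?C" by (simp_all add: u)
    thus "left_coeff p c s u (length ?A) + left_coeff p c s u (Suc (length ?A)) = 0"
      using q_nonzero Bnz by (simp add: left_coeff_def ss cB field_simps)
  qed
qed

lemma insertion_sum_reflected_back:
  assumes k: "1 \<le> s" "s < k" "k < n" and u: "u = [s..<k] @ k # reflected_word n k"
  shows "insertion_sum (right_coeff p 1 k u) k u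
         = sh_smult (right_coeff p 1 k u (length u)) (sh_mono (u @ [k]))"
proof (rule insertion_sum_cancel_back[OF u])
  let ?A = "[s..<k]" and ?R = "reflected_word n k"
  have A: "braiding p k ?A = inverse q" using braiding_upt_below[of s k] k by simp
  have kk: "p k k = q" using p_diag k by simp
  have "?R \<noteq> []" by (simp add: reflected_word_def)
  moreover have "last ?R \<in> {Suc k..n}" using k last_in_set[OF \<open>?R \<noteq> []\<close>] by (simp add: set_reflected_word)
  ultimately show "?R \<noteq> []" "last ?R \<noteq> k" by auto
  fix t assume t: "t < length u" "t \<noteq> length ?A" "t \<noteq> Suc (length ?A)"
  show "right_coeff p 1 k u t = 0"
  proof (cases "t < length ?A")
    case True
    hence "braiding p k (take t u) = 1"
      using braiding_take_upt[of s k t] k by (simp add: u)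
    thus ?thesis by (simp add: right_coeff_def)
  next
    case False
    define j where "j = t - Suc (length ?A)"
    have j: "0 < j" "j < length ?R" using False t by (auto simp: j_def u)
    have "take t u = ?A @ k # take j ?R" using False t by (simp add: u take_Cons' j_def)
    hence "braiding p k (take t u) = 1"
      using braiding_reflected_word(3)[OF _ _ j] A kk k q_nonzero
      by (simp add: power2_eq_square field_simps)
    thus ?thesis by (simp add: right_coeff_def)
  qed
next
  let ?A = "[s..<k]"
  have A: "braiding p k ?A = inverse q" and kk: "p k k = q"
    using braiding_upt_below[of s k] p_diag k by simp_all
  have "take (length ?A) u = ?A" "take (Suc (length ?A)) u = ?A @ [k]" by (simp_all add: u)
  thus "right_coeff p 1 k u (length ?A) + right_coeff p 1 k u (Suc (length ?A)) = 0"
    using q_nonzero by (simp add: right_coeff_def A kk field_simps power2_eq_square)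
qed

lemma letters_nonzero:
  assumes "1 \<le> a" "a \<le> n" "\<And>x. x \<in> set u \<Longrightarrow> 1 \<le> x \<and> x \<le> n"
  shows "\<forall>x\<in>set u. p a x \<noteq> 0 \<and> p x a \<noteq> 0"
  using assms p_nonzero by blast

lemma vleft_insertion:
  assumes k: "1 \<le> k" "k < m" "k + m < 2*n"
    and a: "a = gidx n m" and u: "u = rev (map (gidx n) [k..<m])"
  shows "insertion_sum (left_coeff p 1 a u) a u = sh_smult (left_coeff p 1 a u 0) (sh_mono (a # u))"
      (is ?collapse)
    and "eps q n k (m - 1) * (inverse (braiding p a u) - 1) = eps q n k m * (q - 1)" (is ?eps)
proof -
  have "?collapse \<and> ?eps"
  proof (cases "m \<le> n")
    case True
    have au: "a = m" "u = rev [k..<m]" using True by (simp_all add: a u map_gidx_upt_le)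
    have ?collapse using insertion_sum_low_front[OF k(1,2) True au(2)] by (simp add: au)
    moreover have "braiding p a u = (if m = n then inverse (q ^ 2) else inverse q)"
      using braiding_upt_below[of k m] True k by (simp add: au)
    moreover have "eps q n k (m - 1) = 1" "eps q n k m = (if m = n then 1 + q else 1)"
      using True k unfolding eps_def phi_def by auto
    ultimately show ?thesis using q_nonzero by (simp add: power2_eq_square algebra_simps)
  next
    case False
    define s where "s = 2*n - m"
    have s: "k < s" "s < n" "m = 2*n - s" using False k by (auto simp: s_def)
    have a: "a = s" using False by (simp add: a gidx_gt s_def)
    have u: "u = reflected_word n s @ s # rev [k..<s]"
      using rev_map_gidx_reflected_front[of k s n] s by (simp add: u)
    have C: "braiding p s [k..<s] = inverse q" using braiding_upt_below[of k s] k s by simp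
    have ?collapse using insertion_sum_reflected_front[of k s u 1] s k C by (simp add: a u)
    moreover have "braiding p a u = inverse q"
      using braiding_reflected_word(1)[of s] p_diag[of s] C s k q_nonzero
      by (simp add: a u power2_eq_square field_simps)
    moreover have "eps q n k (m - 1) = 1 + q" "eps q n k m = 1 + q"
      using False k s unfolding eps_def phi_def by auto
    ultimately show ?thesis by simp
  qed
  thus ?collapse ?eps by simp_all
qed

lemma vright_insertion:
  assumes k: "1 \<le> k" "k < m" "m < 2*n" "2*n < k + m"
    and b: "b = gidx n k" and u: "u = rev (map (gidx n) [Suc k..<Suc m])"
  shows "insertion_sum (right_coeff p 1 b u) b u
           = sh_smult (right_coeff p 1 b u (length u)) (sh_mono (u @ [b]))" (is ?collapse)
    and "eps q n (Suc k) m * (inverse (braiding p b u) - 1) = eps q n k m * (q - 1)" (is ?eps)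
proof -
  define s where "s = 2*n - m"
  have s: "0 < s" "s < k" "m = 2*n - s" using k by (auto simp: s_def)
  have "?collapse \<and> ?eps"
  proof (cases "n \<le> k")
    case True
    have b: "b = 2*n - k" using True by (cases "k = n") (auto simp: b gidx_gt)
    have u: "u = [s..<b]" using rev_map_gidx_upt_high[of n k m] True k by (simp add: u b s_def)
    have sb: "1 \<le> s" "s < b" "b \<le> n" using s k True by (auto simp: b)
    have ?collapse by (rule insertion_sum_low_back[OF sb u])
    moreover have "braiding p b u = (if k = n then inverse (q ^ 2) else inverse q)"
    proof -
      have "b = n \<longleftrightarrow> k = n" using True k by (auto simp: b)
      thus ?thesis using braiding_upt_below[OF sb] by (simp add: u)
    qed
    moreover have "eps q n (Suc k) m = 1" "eps q n k m = (if k = n then 1 + q else 1)"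
      using True k unfolding eps_def phi_def by auto
    ultimately show ?thesis using q_nonzero by (simp add: power2_eq_square algebra_simps)
  next
    case False
    have b: "b = k" using False by (simp add: b)
    have u: "u = [s..<k] @ k # reflected_word n k"
      using rev_map_gidx_reflected_back[of s k n m] s False by (simp add: u)
    have A: "braiding p k [s..<k] = inverse q" using braiding_upt_below[of s k] s False by simp
    have ?collapse using insertion_sum_reflected_back[of s k u] s False u by (simp add: b)
    moreover have "braiding p b u = inverse q"
      using braiding_reflected_word(1)[of k] p_diag[of k] A k False q_nonzero
      by (simp add: b u power2_eq_square field_simps)
    moreover have "eps q n (Suc k) m = 1 + q" "eps q n k m = 1 + q"
      using False k unfolding eps_def phi_def by auto
    ultimately show ?thesis by simp
  qed
  thus ?collapse ?eps by simp_all
qed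

lemma vbr_phi_insertion:
  assumes k: "1 \<le> k" "k < n" and m: "m = 2*n - k"
    and a: "a = gidx n m" and u: "u = rev (map (gidx n) [k..<m])"
  shows "insertion_sum (left_coeff p (inverse q) a u) a u
           = sh_smult (left_coeff p (inverse q) a u 0) (sh_mono (a # u))"
    and "eps q n k (m - 1) * (inverse (braiding p a u) - inverse q) = eps q n k m * (q - 1)"
proof -
  have a: "a = k" using k by (simp add: a m gidx_gt)
  have u: "u = reflected_word n k @ [k]"
    using rev_map_gidx_reflected_front[of k k n] k by (simp add: u m)
  show "insertion_sum (left_coeff p (inverse q) a u) a u
          = sh_smult (left_coeff p (inverse q) a u 0) (sh_mono (a # u))"
    using insertion_sum_reflected_front[of k k u "inverse q"] k by (simp add: a u)
  have "braiding p a u = 1"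
    using braiding_reflected_word(1)[of k] p_diag[of k] k q_nonzero
    by (simp add: a u power2_eq_square field_simps)
  moreover have "eps q n k (m - 1) = 1 + q" "eps q n k m = 1 + inverse q"
    using k m unfolding eps_def phi_def by auto
  ultimately show "eps q n k (m - 1) * (inverse (braiding p a u) - inverse q) = eps q n k m * (q - 1)"
    using q_nonzero by (simp add: field_simps)
qed

lemma vleft_eq:
  assumes "1 \<le> k" "k + (k + d) < 2*n"
  shows "vleft p n k d = sh_smult (alpha p q n k (k + d)) (sh_mono (rev (vword n k (k + d))))"
  using assms
proof (induction d)
  case 0
  thus ?case by (simp add: shx_def vword_def sh_smult_def)
next
  case (Suc d)
  define m where "m = k + Suc d"
  define a where "a = gidx n m"
  define u where "u = rev (vword n k (k + d))"
  have u_upt: "u = rev (map (gidx n) [k..<m])" by (simp add: u_def vword_def m_def)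
  have k: "1 \<le> k" "k < m" "k + m < 2*n" using Suc.prems by (simp_all add: m_def)
  have IH: "vleft p n k d = sh_smult (alpha p q n k (k + d)) (sh_mono u)"
    using Suc by (simp add: u_def)
  have nz: "\<forall>x\<in>set u. p a x \<noteq> 0 \<and> p x a \<noteq> 0"
    using k set_vword_bounds[of k "k + d" n] gidx_bounds[of 1 m n]
    by (intro letters_nonzero) (auto simp: a_def u_def m_def)
  have "eps q n k (k + d) * (inverse (braiding p a u) - 1) = eps q n k (Suc (k + d)) * (q - 1)"
    using vleft_insertion(2)[OF k a_def u_upt] by (simp add: m_def)
  hence coeff: "alpha p q n k (k + d) * left_coeff p 1 a u 0 = alpha p q n k m"
    using alpha_Suc_right[of k "k + d"] by (simp add: left_coeff_def u_upt a_def m_def)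
  have "vleft p n k (Suc d) = sh_smult (alpha p q n k (k + d)) (insertion_sum (left_coeff p 1 a u) a u)"
    by (rule vleft_Suc_eq_insertion_sum[OF IH u_def _ nz]) (simp add: a_def m_def)
  also have "\<dots> = sh_smult (alpha p q n k m) (sh_mono (a # u))"
    by (simp add: vleft_insertion(1)[OF k a_def u_upt] coeff)
  also have "a # u = rev (vword n k m)" by (simp add: vword_def a_def u_def m_def)
  finally show ?case by (simp add: m_def)
qed

lemma vright_eq:
  assumes "m < 2*n" "d < m" "d = 0 \<or> 2*n < m - d + m"
  shows "vright p n m d = sh_smult (alpha p q n (m - d) m) (sh_mono (rev (vword n (m - d) m)))"
  using assms
proof (induction d)
  case 0
  thus ?case by (simp add: shx_def vword_def sh_smult_def)
next
  case (Suc d)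
  define k where "k = m - Suc d"
  define b where "b = gidx n k"
  define u where "u = rev (vword n (m - d) m)"
  have k: "1 \<le> k" "k < m" "m < 2*n" "2*n < k + m" "m - d = Suc k"
    using Suc.prems by (auto simp: k_def)
  have u_upt: "u = rev (map (gidx n) [Suc k..<Suc m])" by (simp add: u_def vword_def k)
  have IH: "vright p n m d = sh_smult (alpha p q n (Suc k) m) (sh_mono u)"
    using Suc k by (simp add: u_def)
  have nz: "\<forall>x\<in>set u. p b x \<noteq> 0 \<and> p x b \<noteq> 0"
    using k set_vword_bounds[of "m - d" m n] gidx_bounds[of 1 k n]
    by (intro letters_nonzero) (auto simp: b_def u_def)
  have "alpha p q n (Suc k) m * right_coeff p 1 b u (length u) = alpha p q n k m"
    using alpha_Suc_left[OF k(2) vright_insertion(2)[OF k(1-4) b_def u_upt]]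
    by (simp add: right_coeff_def u_upt b_def)
  hence "vright p n m (Suc d) = sh_smult (alpha p q n k m) (sh_mono (u @ [b]))"
    using vright_Suc_eq_insertion_sum[OF IH u_def _ nz] vright_insertion(1)[OF k(1-4) b_def u_upt]
    by (simp add: b_def k_def)
  also have "u @ [b] = rev (vword n k m)"
    using k by (simp add: vword_def u_upt b_def upt_conv_Cons)
  finally show ?case by (simp add: k_def)
qed

lemma vbr_phi_eq:
  assumes k: "1 \<le> k" "k < n" and m: "m = 2*n - k"
  shows "vbr p q n k m = sh_smult (alpha p q n k m) (sh_mono (rev (vword n k m)))"
proof -
  define a where "a = gidx n m"
  define u where "u = rev (vword n k (m - 1))"
  have m1: "Suc (m - 1) = m" "k \<le> m - 1" using k m by simp_all
  hence u_upt: "u = rev (map (gidx n) [k..<m])" by (simp only: u_def vword_def)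
  have IH: "vleft p n k (m - 1 - k) = sh_smult (alpha p q n k (m - 1)) (sh_mono u)"
    using vleft_eq[of k "m - 1 - k"] k m by (simp add: u_def)
  have nz: "\<forall>x\<in>set u. p a x \<noteq> 0 \<and> p x a \<noteq> 0"
    using k m set_vword_bounds[of k "m - 1" n] gidx_bounds[of 1 m n]
    by (intro letters_nonzero) (auto simp: a_def u_def)
  have "alpha p q n k (m - 1) * left_coeff p (inverse q) a u 0 = alpha p q n k m"
    using alpha_Suc_right[OF m1(2), of q n, unfolded m1(1)] vbr_phi_insertion(2)[OF k m a_def u_upt]
    by (simp add: left_coeff_def u_upt a_def)
  hence "vbr p q n k m = sh_smult (alpha p q n k m) (sh_mono (a # u))"
    using vbr_phi_eq_insertion_sum[OF _ _ IH u_def a_def nz] vbr_phi_insertion(1)[OF k m a_def u_upt]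
      k m by (simp add: phi_def)
  also have "a # u = rev (vword n k m)"
    using k m by (simp add: vword_def a_def u_upt)
  finally show ?thesis .
qed

lemma vbr_eq:
  assumes "1 \<le> k" "k \<le> m" "m < 2*n"
  shows "vbr p q n k m = sh_smult (alpha p q n k m) (sh_mono (rev (vword n k m)))"
proof -
  consider "k = m" | "k \<noteq> m" "m < phi n k" | "k \<noteq> m" "phi n k < m" | "k \<noteq> m" "m = phi n k"
    by linarith
  thus ?thesis
  proof cases
    case 1
    thus ?thesis by (simp add: vbr_def shx_def vword_def sh_smult_def)
  next
    case 2
    thus ?thesis using vleft_eq[of k "m - k"] assms by (simp add: vbr_def phi_def)
  next
    case 3
    thus ?thesis using vright_eq[of m "m - k"] assms by (simp add: vbr_def phi_def)
  next
    case 4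
    thus ?thesis using vbr_phi_eq[of k m] assms by (simp add: phi_def)
  qed
qed

end

theorem proposition4p2:
  fixes p :: "nat \<Rightarrow> nat \<Rightarrow> 'a::field" and q :: 'a and n k m :: nat
  assumes n2: "n \<ge> 2"
    and pnz: "\<And>i j. 1 \<le> i \<Longrightarrow> i \<le> n \<Longrightarrow> 1 \<le> j \<Longrightarrow> j \<le> n \<Longrightarrow> p i j \<noteq> 0"
    and qnz: "q \<noteq> 0" and q3: "q ^ 3 \<noteq> 1" and qm1: "q \<noteq> -1"
    and pii: "\<And>i. 1 \<le> i \<Longrightarrow> i < n \<Longrightarrow> p i i = q"
    and pnn: "p n n = q ^ 2"
    and padj: "\<And>i. 1 < i \<Longrightarrow> i < n \<Longrightarrow> p i (i - 1) * p (i - 1) i = inverse q"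
    and plast: "p (n - 1) n * p n (n - 1) = inverse (q ^ 2)"
    and pfar: "\<And>i j. 1 \<le> i \<Longrightarrow> i + 1 < j \<Longrightarrow> j \<le> n \<Longrightarrow> p i j * p j i = 1"
    and km: "1 \<le> k" "k \<le> m" "m < 2 * n"
  shows "vbr p q n k m = sh_smult (alpha p q n k m) (sh_mono (rev (vword n k m)))"
proof -
  interpret sp_braiding p q n
    using pnz qnz pii padj plast pfar by unfold_locales
  show ?thesis using vbr_eq[OF km] .
qed

end
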